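(* Let $q\ge 2$, $n\ge 1$, $f:\mathbb{Z}_q^n\to\mathbb{R}$, let $M$ be the $q$-ary Möbius transform of $f$, and let $I^{SV}(i)$ be the Shapley value of feature $i\in D$ for the associated value function $v$. Then for every $i\in D$, $$I^{SV}(i)\;=\;-\sum_{\substack{\mathbf{k}\in\mathbb{Z}_q^n\\ k_i\neq 0}}\frac{1}{\|\mathbf{k}\|_0\, q^{\|\mathbf{k}\|_0}}\,M[\mathbf{k}].$$
   Context: Elements of $\mathbb{Z}_q^n$ are vectors $\mathbf{m}=(m_1,\dots,m_n)$ with $m_i\in\{0,1,\dots,q-1\}$. $D=\{1,\dots,n\}$, and for $T\subseteq D$, $\bar T=D\setminus T$. $\|\mathbf{k}\|_0$ is the number of nonzero coordinates of $\mathbf{k}$. Partial order: $\mathbf{m}\le\mathbf{k}$ iff for every $i$, $m_i=k_i$ or $m_i=0$; in that case $\mathbf{k}-\mathbf{m}$ is the coordinatewise integer difference. The $q$-ary Möbius transform of $f$ is $M[\mathbf{k}]=\sum_{\mathbf{m}\le\mathbf{k}}(-1)^{\|\mathbf{k}-\mathbf{m}\|_0} f(\mathbf{m})$. The value function (query encoded as the all-zeros vector, uniform marginalization of absent features) is $v_T=\frac{1}{q^{|\bar T|}}\sum_{\mathbf{r}\in\mathbb{Z}_q^n:\ \mathbf{r}_T=\mathbf{0}} f(\mathbf{r})$ for $T\subseteq D$. The Shapley value is $I^{SV}(i)=\sum_{T\subseteq D\setminus\{i\}}\frac{|T|!\,(n-|T|-1)!}{n!}\big[v_{T\cup\{i\}}-v_T\big]$.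 *)

theory Defs
  imports "HOL-Analysis.Analysis"
begin

text \<open>Elements of Z_q^n are represented as functions nat => nat that vanish outside
  D = {1..n} and take values in {0..q-1} on D.\<close>

definition Zqn :: "nat \<Rightarrow> nat \<Rightarrow> (nat \<Rightarrow> nat) set" where
  "Zqn q n = {m. (\<forall>i\<in>{1..n}. m i < q) \<and> (\<forall>i. i \<notin> {1..n} \<longrightarrow> m i = 0)}"

definition supp0 :: "nat \<Rightarrow> (nat \<Rightarrow> nat) \<Rightarrow> nat set" where
  "supp0 n k = {i\<in>{1..n}. k i \<noteq> 0}"

definition norm0 :: "nat \<Rightarrow> (nat \<Rightarrow> nat) \<Rightarrow> nat" where
  "norm0 n k = card (supp0 n k)"

definition qle :: "nat \<Rightarrow> (nat \<Rightarrow> nat) \<Rightarrow> (nat \<Rightarrow> nat) \<Rightarrow> bool" where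
  "qle n m k \<longleftrightarrow> (\<forall>i\<in>{1..n}. m i = k i \<or> m i = 0)"

definition mobius :: "nat \<Rightarrow> nat \<Rightarrow> ((nat \<Rightarrow> nat) \<Rightarrow> real) \<Rightarrow> (nat \<Rightarrow> nat) \<Rightarrow> real" where
  "mobius q n f k = (\<Sum>m\<in>{m\<in>Zqn q n. qle n m k}.
      (-1) ^ norm0 n (\<lambda>i. k i - m i) * f m)"

definition valfun :: "nat \<Rightarrow> nat \<Rightarrow> ((nat \<Rightarrow> nat) \<Rightarrow> real) \<Rightarrow> nat set \<Rightarrow> real" where
  "valfun q n f T = (1 / real q ^ card ({1..n} - T)) *
      (\<Sum>r\<in>{r\<in>Zqn q n. \<forall>i\<in>T. r i = 0}. f r)"

definition shapley :: "nat \<Rightarrow> nat \<Rightarrow> ((nat \<Rightarrow> nat) \<Rightarrow> real) \<Rightarrow> nat \<Rightarrow> real" where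
  "shapley q n f i = (\<Sum>T\<in>Pow ({1..n} - {i}).
      (fact (card T) * fact (n - card T - 1) / fact n) *
      (valfun q n f (insert i T) - valfun q n f T))"

end

theory Submission
  imports Defs
begin

text \<open>Moebius inversion gives f(r) = sum of M[k] over k <= r. Among the q^|D - T| points r with
  r_T = 0, a fixed k lies below exactly q^(|D - T| - ||k||_0) of them if its support avoids T, and
  below none otherwise; so v_T is the sum of M[k] / q^||k||_0 over the k whose support avoids T.
  Hence v_(T + i) - v_T collects, with a minus sign, the k with k_i nonzero whose support avoids T,
  and for such a k the Shapley weights of the sets T contained in D - supp k add up to 1 / ||k||_0
  by the hockey-stick identity.\<close>

lemma sum_choose_mult_fact:
  "Suc s * (\<Sum>t\<le>N. (N choose t) * fact t * fact (N + s - t)) = (fact (N + Suc s) :: nat)"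
proof -
  have summand: "(N choose t) * fact t * fact (N + s - t) = fact N * fact s * ((s + (N - t)) choose (N - t))"
    if "t \<le> N" for t
  proof -
    have "fact (N - t) * fact s * ((s + (N - t)) choose (N - t)) = (fact (s + (N - t)) :: nat)"
      using binomial_fact_lemma[of "N - t" "s + (N - t)"] by simp
    moreover have "fact t * fact (N - t) * (N choose t) = (fact N :: nat)"
      using binomial_fact_lemma[OF that] .
    moreover have "N + s - t = s + (N - t)" using that by simp
    ultimately show ?thesis by (metis mult.assoc mult.commute)
  qed
  have "(\<Sum>t\<le>N. (N choose t) * fact t * fact (N + s - t)) =
        fact N * fact s * (\<Sum>t\<le>N. (s + (N - t)) choose (N - t))"
    by (simp add: summand sum_distrib_left)
  also have "(\<Sum>t\<le>N. (s + (N - t)) choose (N - t)) = (\<Sum>u\<le>N. (s + u) choose u)"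
    using sum.atLeastAtMost_rev[of "\<lambda>u. (s + u) choose u" 0 N] by (simp add: atMost_atLeast0)
  also have "\<dots> = Suc (s + N) choose N" by (rule sum_choose_lower)
  finally have "Suc s * (\<Sum>t\<le>N. (N choose t) * fact t * fact (N + s - t)) =
      fact N * fact (Suc s) * ((N + Suc s) choose N)"
    by (simp add: algebra_simps)
  also have "\<dots> = fact (N + Suc s)"
    using binomial_fact_lemma[of N "N + Suc s"] by simp
  finally show ?thesis .
qed

definition shapley_weight :: "nat \<Rightarrow> nat set \<Rightarrow> real" where
  "shapley_weight n T = fact (card T) * fact (n - card T - 1) / fact n"

lemma shapley_eq_sum_shapley_weight:
  "shapley q n f i =
    (\<Sum>T\<in>Pow ({1..n} - {i}). shapley_weight n T * (valfun q n f (insert i T) - valfun q n f T))"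
  by (simp add: shapley_def shapley_weight_def)

lemma sum_shapley_weight:
  assumes "finite X" and "card X < n"
  shows "(\<Sum>T\<in>Pow X. shapley_weight n T) = 1 / real (n - card X)"
proof -
  define N where "N = card X"
  obtain s where n: "n = N + Suc s" using assms(2) less_iff_Suc_add N_def by auto
  let ?w = "\<lambda>t. fact t * fact (N + s - t) / (fact n :: real)"
  have "(\<Sum>T\<in>Pow X. shapley_weight n T) = (\<Sum>T\<in>Pow X. ?w (card T))"
    unfolding n by (simp add: shapley_weight_def)
  also have "\<dots> = (\<Sum>t\<le>N. \<Sum>T\<in>{T \<in> Pow X. card T = t}. ?w (card T))"
    by (rule sum.group[symmetric]) (auto simp: assms(1) N_def card_mono)
  also have "\<dots> = (\<Sum>t\<le>N. real (N choose t) * ?w t)"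
    using n_subsets[OF assms(1)] by (simp add: Pow_def N_def conj_commute)
  also have "\<dots> = real (\<Sum>t\<le>N. (N choose t) * fact t * fact (N + s - t)) / fact n"
    by (simp add: sum_divide_distrib mult.assoc)
  also have "\<dots> = 1 / real (Suc s)"
  proof -
    have "real (Suc s) * real (\<Sum>t\<le>N. (N choose t) * fact t * fact (N + s - t)) = fact n"
      unfolding n by (metis sum_choose_mult_fact of_nat_fact of_nat_mult)
    then show ?thesis by (simp add: field_simps)
  qed
  finally show ?thesis using n N_def by simp
qed

lemma sum_shapley_weight_disjoint:
  assumes "i \<in> S" and "S \<subseteq> {1..n}"
  shows "(\<Sum>T\<in>Pow ({1..n} - {i}). if S \<inter> T = {} then shapley_weight n T else 0) = 1 / real (card S)"
proof -
  have "{T \<in> Pow ({1..n} - {i}). S \<inter> T = {}} = Pow ({1..n} - S)"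
    using assms by auto
  moreover have "finite S"
    using assms(2) finite_subset by blast
  then have "card ({1..n} - S) = n - card S"
    using assms(2) by (simp add: card_Diff_subset)
  moreover have "0 < card S"
    using \<open>finite S\<close> assms(1) card_gt_0_iff by blast
  moreover have "card S \<le> n"
    using card_mono[OF _ assms(2)] by simp
  ultimately show ?thesis
    using sum_shapley_weight[of "{1..n} - S" n] by (simp add: sum.inter_filter[symmetric])
qed

lemma bij_betw_restrict_agreeing_outside:
  "bij_betw (\<lambda>r. restrict r U) {r. (\<forall>j\<in>U. r j < q) \<and> (\<forall>j. j \<notin> U \<longrightarrow> r j = k j)}
     (\<Pi>\<^sub>E j\<in>U. {..<q})"
  by (rule bij_betw_byWitness[where f' = "\<lambda>g j. if j \<in> U then g j else k j"])
    (auto simp: fun_eq_iff PiE_def extensional_def)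

lemma card_agreeing_outside:
  assumes "finite U"
  shows "card {r. (\<forall>j\<in>U. r j < q) \<and> (\<forall>j. j \<notin> U \<longrightarrow> r j = k j)} = q ^ card U"
  using bij_betw_same_card[OF bij_betw_restrict_agreeing_outside[of U q k]] assms
  by (simp add: card_PiE)

lemma finite_Zqn: "finite (Zqn q n)"
proof -
  have "Zqn q n = {r. (\<forall>j\<in>{1..n}. r j < q) \<and> (\<forall>j. j \<notin> {1..n} \<longrightarrow> r j = 0)}"
    by (simp add: Zqn_def)
  then show ?thesis
    using bij_betw_finite[OF bij_betw_restrict_agreeing_outside[of "{1..n}" q "\<lambda>_. 0"]]
    by (simp add: finite_PiE)
qed

lemma supp0_subset: "supp0 n k \<subseteq> {1..n}"
  by (auto simp: supp0_def)

lemma mem_supp0_iff: "i \<in> {1..n} \<Longrightarrow> i \<in> supp0 n k \<longleftrightarrow> k i \<noteq> 0"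
  by (simp add: supp0_def)

lemma finite_supp0: "finite (supp0 n k)"
  using finite_subset[OF supp0_subset] by simp

definition mask :: "(nat \<Rightarrow> nat) \<Rightarrow> nat set \<Rightarrow> nat \<Rightarrow> nat" where
  "mask k A = (\<lambda>j. if j \<in> A then k j else 0)"

lemma supp0_mask: "A \<subseteq> supp0 n k \<Longrightarrow> supp0 n (mask k A) = A"
  by (auto simp: mask_def supp0_def)

lemma mask_mask: "B \<subseteq> A \<Longrightarrow> mask (mask k A) B = mask k B"
  by (auto simp: mask_def fun_eq_iff)

lemma mask_supp0: "k \<in> Zqn q n \<Longrightarrow> mask k (supp0 n k) = k"
  by (auto simp: mask_def fun_eq_iff supp0_def Zqn_def)

lemma mask_in_Zqn: "k \<in> Zqn q n \<Longrightarrow> mask k A \<in> Zqn q n"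
  by (auto simp: mask_def Zqn_def)

lemma norm0_diff_mask:
  assumes "A \<subseteq> supp0 n k"
  shows "norm0 n (\<lambda>j. k j - mask k A j) = norm0 n k - card A"
proof -
  have "supp0 n (\<lambda>j. k j - mask k A j) = supp0 n k - A"
    using assms by (auto simp: mask_def supp0_def)
  then show ?thesis
    using assms finite_supp0 by (simp add: norm0_def card_Diff_subset finite_subset)
qed

lemma bij_betw_mask_down_set:
  assumes "k \<in> Zqn q n"
  shows "bij_betw (mask k) (Pow (supp0 n k)) {m \<in> Zqn q n. qle n m k}"
proof (rule bij_betw_byWitness[where f' = "supp0 n"])
  show "\<forall>A\<in>Pow (supp0 n k). supp0 n (mask k A) = A"
    using supp0_mask by blast
  show "\<forall>m\<in>{m \<in> Zqn q n. qle n m k}. mask k (supp0 n m) = m"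
    by (force simp: fun_eq_iff mask_def supp0_def qle_def Zqn_def)
  show "mask k ` Pow (supp0 n k) \<subseteq> {m \<in> Zqn q n. qle n m k}"
    using assms by (auto simp: mask_def supp0_def qle_def Zqn_def)
  show "supp0 n ` {m \<in> Zqn q n. qle n m k} \<subseteq> Pow (supp0 n k)"
    unfolding supp0_def qle_def by force
qed

lemma mobius_eq_sum_Pow_supp0:
  assumes "k \<in> Zqn q n"
  shows "mobius q n f k = (\<Sum>A\<in>Pow (supp0 n k). (-1) ^ (norm0 n k - card A) * f (mask k A))"
  unfolding mobius_def sum.reindex_bij_betw[OF bij_betw_mask_down_set[OF assms], symmetric]
  by (intro sum.cong refl) (simp add: norm0_diff_mask)

lemma mobius_inversion:
  assumes r: "r \<in> Zqn q n"
  shows "f r = (\<Sum>k\<in>{k \<in> Zqn q n. qle n k r}. mobius q n f k)"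
proof -
  let ?S = "supp0 n r"
  let ?g = "\<lambda>B. f (mask r B)"
  have "(\<Sum>k\<in>{k \<in> Zqn q n. qle n k r}. mobius q n f k) = (\<Sum>T\<in>Pow ?S. mobius q n f (mask r T))"
    by (rule sum.reindex_bij_betw[OF bij_betw_mask_down_set[OF r], symmetric])
  also have "\<dots> = (\<Sum>T\<in>Pow ?S. (-1) ^ card T * (\<Sum>B\<in>Pow T. (-1) ^ card B * ?g B))"
  proof (intro sum.cong refl)
    fix T assume T: "T \<in> Pow ?S"
    then have "finite T"
      using finite_supp0 finite_subset by blast
    have sign: "(-1::real) ^ (card T - card B) = (-1) ^ card T * (-1) ^ card B" if "B \<subseteq> T" for B
    proof -
      have "card B \<le> card T"
        using that \<open>finite T\<close> by (rule card_mono[rotated])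
      then show ?thesis
        by (simp add: neg_one_power_add_eq_neg_one_power_diff[symmetric] power_add)
    qed
    have "mobius q n f (mask r T) = (\<Sum>B\<in>Pow T. (-1) ^ (card T - card B) * ?g B)"
      using T by (simp add: mobius_eq_sum_Pow_supp0 mask_in_Zqn[OF r] supp0_mask mask_mask norm0_def)
    then show "mobius q n f (mask r T) = (-1) ^ card T * (\<Sum>B\<in>Pow T. (-1) ^ card B * ?g B)"
      by (simp add: sign sum_distrib_left mult.assoc)
  qed
  also have "\<dots> = ?g ?S"
    by (rule inclusion_exclusion_symmetric[OF _ finite_supp0, symmetric]) simp
  finally show ?thesis
    by (simp add: mask_supp0[OF r])
qed

lemma up_set_vanishing_on_eq_empty:
  assumes "supp0 n k \<inter> T \<noteq> {}"
  shows "{r \<in> Zqn q n. (\<forall>j\<in>T. r j = 0) \<and> qle n k r} = {}"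
  using assms unfolding supp0_def qle_def by force

lemma up_set_vanishing_on_eq:
  assumes "k \<in> Zqn q n" and "T \<subseteq> {1..n}" and "supp0 n k \<inter> T = {}"
  shows "{r \<in> Zqn q n. (\<forall>j\<in>T. r j = 0) \<and> qle n k r} =
    {r. (\<forall>j\<in>{1..n} - T - supp0 n k. r j < q) \<and> (\<forall>j. j \<notin> {1..n} - T - supp0 n k \<longrightarrow> r j = k j)}"
    (is "?L = ?R")
proof (intro set_eqI iffI)
  fix r assume "r \<in> ?L"
  then have r: "r \<in> Zqn q n" "\<forall>j\<in>T. r j = 0" "qle n k r"
    by auto
  have "r j = k j" if "j \<notin> {1..n} - T - supp0 n k" for j
  proof (cases "j \<in> {1..n}")
    case False
    then show ?thesis
      using r(1) assms(1) by (simp add: Zqn_def)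
  next
    case True
    then have "j \<in> T \<and> k j = 0 \<or> k j \<noteq> 0"
      using that assms(3) by (auto simp: supp0_def)
    then show ?thesis
      using True r(2) bspec[OF r(3)[unfolded qle_def] True] by auto
  qed
  then show "r \<in> ?R"
    using r(1) by (simp add: Zqn_def)
next
  fix r assume "r \<in> ?R"
  then show "r \<in> ?L"
    using assms unfolding Zqn_def supp0_def qle_def by auto
qed

lemma card_up_set_vanishing_on:
  assumes "k \<in> Zqn q n" and "T \<subseteq> {1..n}" and "supp0 n k \<inter> T = {}"
  shows "card {r \<in> Zqn q n. (\<forall>j\<in>T. r j = 0) \<and> qle n k r} = q ^ (card ({1..n} - T) - norm0 n k)"
proof -
  have "supp0 n k \<subseteq> {1..n} - T"
    using assms(3) supp0_subset by blast
  then have "card ({1..n} - T - supp0 n k) = card ({1..n} - T) - norm0 n k"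
    by (simp add: norm0_def card_Diff_subset finite_supp0)
  then show ?thesis
    unfolding up_set_vanishing_on_eq[OF assms] by (subst card_agreeing_outside) auto
qed

lemma valfun_eq_sum_mobius:
  assumes "q > 0" and "T \<subseteq> {1..n}"
  shows "valfun q n f T =
    (\<Sum>k\<in>Zqn q n. if supp0 n k \<inter> T = {} then mobius q n f k / real q ^ norm0 n k else 0)"
proof -
  let ?R = "{r \<in> Zqn q n. \<forall>j\<in>T. r j = 0}"
  let ?a = "card ({1..n} - T)"
  have "(\<Sum>r\<in>?R. f r) = (\<Sum>r\<in>?R. \<Sum>k\<in>{k \<in> Zqn q n. qle n k r}. mobius q n f k)"
    by (intro sum.cong refl) (simp add: mobius_inversion)
  also have "\<dots> = (\<Sum>k\<in>Zqn q n. \<Sum>r\<in>{r \<in> ?R. qle n k r}. mobius q n f k)"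
    by (rule sum.swap_restrict) (simp_all add: finite_Zqn)
  also have "\<dots> = (\<Sum>k\<in>Zqn q n. real (card {r \<in> Zqn q n. (\<forall>j\<in>T. r j = 0) \<and> qle n k r}) * mobius q n f k)"
    by (simp add: conj_assoc)
  finally have "valfun q n f T =
      (\<Sum>k\<in>Zqn q n. real (card {r \<in> Zqn q n. (\<forall>j\<in>T. r j = 0) \<and> qle n k r}) * mobius q n f k / real q ^ ?a)"
    by (simp add: valfun_def sum_divide_distrib)
  also have "\<dots> = (\<Sum>k\<in>Zqn q n. if supp0 n k \<inter> T = {} then mobius q n f k / real q ^ norm0 n k else 0)"
  proof (intro sum.cong refl)
    fix k assume k: "k \<in> Zqn q n"
    show "real (card {r \<in> Zqn q n. (\<forall>j\<in>T. r j = 0) \<and> qle n k r}) * mobius q n f k / real q ^ ?a =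
      (if supp0 n k \<inter> T = {} then mobius q n f k / real q ^ norm0 n k else 0)"
    proof (cases "supp0 n k \<inter> T = {}")
      case True
      then have "norm0 n k \<le> ?a"
        unfolding norm0_def using supp0_subset by (intro card_mono) auto
      then have "real q ^ (?a - norm0 n k) = real q ^ ?a / real q ^ norm0 n k"
        using assms(1) by (simp add: power_diff)
      then show ?thesis
        using True assms(1) by (simp add: card_up_set_vanishing_on[OF k assms(2) True])
    qed (simp add: up_set_vanishing_on_eq_empty)
  qed
  finally show ?thesis .
qed

lemma valfun_insert_diff:
  assumes "q > 0" and "i \<in> {1..n}" and "T \<subseteq> {1..n}"
  shows "valfun q n f (insert i T) - valfun q n f T =
    - (\<Sum>k\<in>Zqn q n. if k i \<noteq> 0 \<and> supp0 n k \<inter> T = {} then mobius q n f k / real q ^ norm0 n k else 0)"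
  using assms
  by (simp add: valfun_eq_sum_mobius sum_subtractf[symmetric] sum_negf[symmetric])
    (intro sum.cong refl, auto simp: mem_supp0_iff)

theorem theorem1:
  fixes q n :: nat and f :: "(nat \<Rightarrow> nat) \<Rightarrow> real" and i :: nat
  assumes "q \<ge> 2" and "n \<ge> 1" and "i \<in> {1..n}"
  shows "shapley q n f i =
    - (\<Sum>k\<in>{k\<in>Zqn q n. k i \<noteq> 0}.
         mobius q n f k / (real (norm0 n k) * real q ^ norm0 n k))"
proof -
  let ?c = "\<lambda>k. mobius q n f k / real q ^ norm0 n k"
  (* a defined constant rather than an abbreviation: the simplifier would rewrite {1..n} inside it
     and then fail to match weights *)
  define P where "P = Pow ({1..n} - {i})"
  have weights: "(\<Sum>T\<in>P. if supp0 n k \<inter> T = {} then shapley_weight n T else 0) = 1 / real (norm0 n k)"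
    if "k i \<noteq> 0" for k
    using sum_shapley_weight_disjoint[OF _ supp0_subset] mem_supp0_iff[OF assms(3)] that
    by (simp add: P_def norm0_def)
  have "shapley q n f i = - (\<Sum>T\<in>P. \<Sum>k\<in>Zqn q n.
      shapley_weight n T * (if k i \<noteq> 0 \<and> supp0 n k \<inter> T = {} then ?c k else 0))"
    using assms
    by (simp add: P_def shapley_eq_sum_shapley_weight valfun_insert_diff sum_distrib_left sum_negf subset_iff)
  also have "\<dots> = - (\<Sum>k\<in>Zqn q n.
      if k i \<noteq> 0 then ?c k * (\<Sum>T\<in>P. if supp0 n k \<inter> T = {} then shapley_weight n T else 0) else 0)"
    by (subst sum.swap) (auto simp: sum_distrib_left mult_ac intro!: sum.cong)
  also have "\<dots> = - (\<Sum>k\<in>{k\<in>Zqn q n. k i \<noteq> 0}. mobius q n f k / (real (norm0 n k) * real q ^ norm0 n k))"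
    by (simp add: weights sum.inter_filter finite_Zqn mult.commute cong: if_cong)
  finally show ?thesis .
qed

end
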